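(* Let $n\ge1$ and let $\equiv$ be a lattice congruence of the weak order on $S_n$. For every equivalence class $X$ of $\equiv$, the projection $p(X)=\{p(\pi):\pi\in X\}$ is an equivalence class of the restriction $\equiv^*$. In particular, any two equivalence classes $X,Y$ of $\equiv$ satisfy either $p(X)=p(Y)$ or $p(X)\cap p(Y)=\emptyset$.
   Context: $S_n$ is the set of permutations of $[n]$ in one-line notation, with the weak order (inclusion of inversion sets), which is a lattice. A lattice congruence is an equivalence relation $\equiv$ on $S_n$ such that $\pi\equiv\pi'$ and $\rho\equiv\rho'$ imply $\pi\vee\rho\equiv\pi'\vee\rho'$ and $\pi\wedge\rho\equiv\pi'\wedge\rho'$. For $\pi\in S_n$, $p(\pi)\in S_{n-1}$ is obtained by deleting the value $n$. For $\sigma\in S_{n-1}$, $c_n(\sigma)\in S_n$ is $\sigma$ with $n$ appended at the end. The restriction $\equiv^*$ is the relation on $S_{n-1}$ given by $\sigma\equiv^*\tau$ iff $c_n(\sigma)\equiv c_n(\tau)$; it is a lattice congruence on $S_{n-1}$. *)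

theory Defs
  imports Main
begin

definition perms :: "nat \<Rightarrow> nat list set" where
  "perms n = {xs. distinct xs \<and> set xs = {1..n}}"

definition invs :: "nat list \<Rightarrow> (nat \<times> nat) set" where
  "invs xs = {(a,b). a < b \<and> (\<exists>i j. i < j \<and> j < length xs \<and> xs ! i = b \<and> xs ! j = a)}"

definition weak_le :: "nat list \<Rightarrow> nat list \<Rightarrow> bool" where
  "weak_le xs ys \<longleftrightarrow> invs xs \<subseteq> invs ys"

definition is_join :: "nat \<Rightarrow> nat list \<Rightarrow> nat list \<Rightarrow> nat list \<Rightarrow> bool" where
  "is_join n x y z \<longleftrightarrow> z \<in> perms n \<and> weak_le x z \<and> weak_le y z \<and>
     (\<forall>w\<in>perms n. weak_le x w \<and> weak_le y w \<longrightarrow> weak_le z w)"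

definition is_meet :: "nat \<Rightarrow> nat list \<Rightarrow> nat list \<Rightarrow> nat list \<Rightarrow> bool" where
  "is_meet n x y z \<longleftrightarrow> z \<in> perms n \<and> weak_le z x \<and> weak_le z y \<and>
     (\<forall>w\<in>perms n. weak_le w x \<and> weak_le w y \<longrightarrow> weak_le w z)"

definition lattice_congruence :: "nat \<Rightarrow> (nat list \<times> nat list) set \<Rightarrow> bool" where
  "lattice_congruence n R \<longleftrightarrow> equiv (perms n) R \<and>
     (\<forall>x x' y y' z z'. (x,x') \<in> R \<longrightarrow> (y,y') \<in> R \<longrightarrow>
        is_join n x y z \<longrightarrow> is_join n x' y' z' \<longrightarrow> (z,z') \<in> R) \<and>
     (\<forall>x x' y y' z z'. (x,x') \<in> R \<longrightarrow> (y,y') \<in> R \<longrightarrow>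
        is_meet n x y z \<longrightarrow> is_meet n x' y' z' \<longrightarrow> (z,z') \<in> R)"

definition proj :: "nat \<Rightarrow> nat list \<Rightarrow> nat list" where
  "proj n xs = filter (\<lambda>v. v \<noteq> n) xs"

definition cn :: "nat \<Rightarrow> nat list \<Rightarrow> nat list" where
  "cn n s = s @ [n]"

definition restr :: "nat \<Rightarrow> (nat list \<times> nat list) set \<Rightarrow> (nat list \<times> nat list) set" where
  "restr n R = {(s,t). s \<in> perms (n - 1) \<and> t \<in> perms (n - 1) \<and> (cn n s, cn n t) \<in> R}"

end

theory Submission
  imports Defs
begin

text \<open>
  A permutation x of [n] is determined by its projection p(x) together with the set of values
  standing after n, and the weak order compares both components separately. Joins exist since
  the transitive closure of invs x \<union> invs y is again an inversion set.

  For x \<equiv> y, meeting both with c_n(w0), w0 the longest element of S_(n-1), gives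
  c_n(p x) \<equiv> c_n(p y), so p maps the class of x into the \<equiv>*-class of p(x). Conversely, let
  c_n(p x) \<equiv> c_n(t). Then x' = x \<or> c_n(t) \<equiv> x \<or> c_n(p x) = x, and with u = p(x') also
  c_n(t) \<equiv> c_n(u). Joining with n # [1..<n] gives n # t \<equiv> n # u, which lies above x', and
  meeting with x' gives x' \<equiv> x' \<and> (n # t), a permutation with projection t. Disjointness of
  the images is then disjointness of the classes of \<equiv>*.
\<close>

definition precedes :: "'a list \<Rightarrow> 'a \<Rightarrow> 'a \<Rightarrow> bool" where
  "precedes xs x y \<longleftrightarrow> (\<exists>i j. i < j \<and> j < length xs \<and> xs ! i = x \<and> xs ! j = y)"

lemma precedes_Nil [simp]: "\<not> precedes [] x y"
  by (simp add: precedes_def)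

lemma precedes_Cons: "precedes (a # xs) x y \<longleftrightarrow> (x = a \<and> y \<in> set xs) \<or> precedes xs x y"
proof
  assume "precedes (a # xs) x y"
  then obtain i j where "i < j" "j < Suc (length xs)" "(a # xs) ! i = x" "(a # xs) ! j = y"
    by (auto simp: precedes_def)
  then show "(x = a \<and> y \<in> set xs) \<or> precedes xs x y"
    unfolding precedes_def
    by (cases i; cases j) (auto intro: nth_mem)
next
  assume "(x = a \<and> y \<in> set xs) \<or> precedes xs x y"
  then show "precedes (a # xs) x y"
  proof
    assume "x = a \<and> y \<in> set xs"
    then obtain j where "j < length xs" "xs ! j = y" by (auto simp: in_set_conv_nth)
    with \<open>x = a \<and> y \<in> set xs\<close> show ?thesis
      unfolding precedes_def by (intro exI[of _ 0] exI[of _ "Suc j"]) auto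
  next
    assume "precedes xs x y"
    then obtain i j where "i < j" "j < length xs" "xs ! i = x" "xs ! j = y"
      by (auto simp: precedes_def)
    then show ?thesis
      unfolding precedes_def by (intro exI[of _ "Suc i"] exI[of _ "Suc j"]) auto
  qed
qed

lemma precedes_set: "precedes xs x y \<Longrightarrow> x \<in> set xs \<and> y \<in> set xs"
  unfolding precedes_def by auto

lemma precedes_append:
  "precedes (xs @ ys) x y \<longleftrightarrow> precedes xs x y \<or> precedes ys x y \<or> (x \<in> set xs \<and> y \<in> set ys)"
  by (induction xs) (auto simp: precedes_Cons)

lemma precedes_filter: "precedes (filter P xs) x y \<longleftrightarrow> P x \<and> P y \<and> precedes xs x y"
  by (induction xs) (auto simp: precedes_Cons dest: precedes_set)

lemma precedes_rev: "precedes (rev xs) x y \<longleftrightarrow> precedes xs y x"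
  by (induction xs) (auto simp: precedes_Cons precedes_append)

lemma precedes_upt: "precedes [m..<k] x y \<longleftrightarrow> m \<le> x \<and> x < y \<and> y < k"
  by (induction k) (auto simp: precedes_append precedes_Cons)

lemma precedes_last: "x \<in> set xs \<Longrightarrow> x \<noteq> last xs \<Longrightarrow> precedes xs x (last xs)"
  by (induction xs) (auto simp: precedes_Cons)

lemma precedes_asym: "distinct xs \<Longrightarrow> precedes xs x y \<Longrightarrow> \<not> precedes xs y x"
  unfolding precedes_def by (metis distinct_conv_nth order.strict_trans not_less_iff_gr_or_eq)

lemma precedes_trans: "distinct xs \<Longrightarrow> precedes xs x y \<Longrightarrow> precedes xs y z \<Longrightarrow> precedes xs x z"
  unfolding precedes_def by (metis distinct_conv_nth order.strict_trans order.strict_trans1 less_imp_le)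

lemma precedes_total:
  "x \<in> set xs \<Longrightarrow> y \<in> set xs \<Longrightarrow> x \<noteq> y \<Longrightarrow> precedes xs x y \<or> precedes xs y x"
  unfolding precedes_def in_set_conv_nth by (metis linorder_neqE_nat)

lemma split_maximal_suffix:
  obtains u v where "xs = u @ v" "set v \<subseteq> A" "u \<noteq> [] \<Longrightarrow> last u \<notin> A"
proof
  let ?P = "\<lambda>x. x \<in> A"
  show "xs = rev (dropWhile ?P (rev xs)) @ rev (takeWhile ?P (rev xs))"
    by (metis rev_append rev_rev_ident takeWhile_dropWhile_id)
  show "set (rev (takeWhile ?P (rev xs))) \<subseteq> A" by (auto dest: set_takeWhileD)
  show "last (rev (dropWhile ?P (rev xs))) \<notin> A" if "rev (dropWhile ?P (rev xs)) \<noteq> []"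
    using that by (metis Nil_is_rev_conv hd_dropWhile last_rev)
qed

lemma invs_precedes: "invs xs = {(a, b). a < b \<and> precedes xs b a}"
  by (auto simp: invs_def precedes_def)

lemma perms_precedes_range:
  "x \<in> perms n \<Longrightarrow> precedes x a b \<Longrightarrow> a \<in> {1..n} \<and> b \<in> {1..n}"
  unfolding perms_def by (auto dest: precedes_set)

lemma invs_perms_subset: "x \<in> perms n \<Longrightarrow> invs x \<subseteq> {(a, b). 1 \<le> a \<and> a < b \<and> b \<le> n}"
proof clarify
  fix a b assume "x \<in> perms n" "(a, b) \<in> invs x"
  then show "1 \<le> a \<and> a < b \<and> b \<le> n"
    using perms_precedes_range[of x n b a] by (auto simp: invs_precedes)
qed

lemma trans_invs: "distinct x \<Longrightarrow> trans (invs x)"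
  unfolding trans_def invs_precedes using precedes_trans by fastforce

definition after :: "'a list \<Rightarrow> 'a \<Rightarrow> 'a set" where
  "after xs v = {a. precedes xs v a}"

lemma precedes_if_not_after:
  assumes "distinct xs" "x \<in> after xs v" "y \<in> set xs" "y \<noteq> v" "y \<notin> after xs v"
  shows "precedes xs y x"
proof -
  have "precedes xs v x" "v \<in> set xs" using assms(2) by (auto simp: after_def dest: precedes_set)
  with assms show ?thesis by (metis after_def mem_Collect_eq precedes_total precedes_trans)
qed

lemma precedes_proj: "precedes (proj n x) a b \<longleftrightarrow> a \<noteq> n \<and> b \<noteq> n \<and> precedes x a b"
  unfolding proj_def by (simp add: precedes_filter)

lemma proj_perms: "n \<ge> 1 \<Longrightarrow> x \<in> perms n \<Longrightarrow> proj n x \<in> perms (n - 1)"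
  unfolding perms_def proj_def by auto

lemma after_max_subset:
  assumes "x \<in> perms n"
  shows "after x n \<subseteq> {1..n - 1}"
proof
  fix a assume "a \<in> after x n"
  then have "precedes x n a" by (simp add: after_def)
  moreover have "distinct x" using assms by (simp add: perms_def)
  ultimately have "a \<noteq> n" using precedes_asym by metis
  with perms_precedes_range[OF assms \<open>precedes x n a\<close>] show "a \<in> {1..n - 1}" by auto
qed

lemma invs_split_max:
  assumes x: "x \<in> perms n"
  shows "invs x = invs (proj n x) \<union> (\<lambda>a. (a, n)) ` after x n"
proof (rule set_eqI, clarify)
  fix a b
  show "(a, b) \<in> invs x \<longleftrightarrow> (a, b) \<in> invs (proj n x) \<union> (\<lambda>a. (a, n)) ` after x n"
  proof (cases "b = n")
    case True
    have "a < n" if "precedes x n a"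
      using that after_max_subset[OF x] unfolding after_def by fastforce
    then show ?thesis using True
      by (auto simp: invs_precedes precedes_proj after_def)
  next
    case False
    have "a \<noteq> n" if "precedes x b a" "a < b"
      using that perms_precedes_range[OF x, of b a] by auto
    then show ?thesis using False
      by (auto simp: invs_precedes precedes_proj after_def)
  qed
qed

lemma weak_le_split_max:
  assumes x: "x \<in> perms n" and y: "y \<in> perms n"
  shows "weak_le x y \<longleftrightarrow> invs (proj n x) \<subseteq> invs (proj n y) \<and> after x n \<subseteq> after y n"
proof -
  have "invs (proj n z) \<subseteq> {(a, b). b \<noteq> n}" for z
    by (auto simp: invs_precedes precedes_proj)
  then show ?thesis
    unfolding weak_le_def invs_split_max[OF x] invs_split_max[OF y] by blast
qed

lemma insert_max:
  assumes n: "n \<ge> 1" and uv: "u @ v \<in> perms (n - 1)"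
  shows "u @ n # v \<in> perms n" and "proj n (u @ n # v) = u @ v" and "after (u @ n # v) n = set v"
proof -
  have "set (u @ v) = {1..n - 1}" using uv by (simp add: perms_def)
  moreover have "n \<notin> {1..n - 1}" using n by simp
  ultimately have "n \<notin> set u" "n \<notin> set v" by auto
  then show "u @ n # v \<in> perms n" "after (u @ n # v) n = set v"
    using uv n by (auto simp: perms_def after_def precedes_append precedes_Cons dest: precedes_set)
  have "filter (\<lambda>w. w \<noteq> n) xs = xs" if "n \<notin> set xs" for xs :: "nat list"
    using that by (induction xs) auto
  then show "proj n (u @ n # v) = u @ v"
    using \<open>n \<notin> set u\<close> \<open>n \<notin> set v\<close> by (simp add: proj_def)
qed

lemma append_max_props:
  assumes "n \<ge> 1" "s \<in> perms (n - 1)"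
  shows "cn n s \<in> perms n" "proj n (cn n s) = s" "after (cn n s) n = {}"
  using insert_max[OF assms(1), of s "[]"] assms(2) by (auto simp: cn_def)

lemma prepend_max_props:
  assumes "n \<ge> 1" "s \<in> perms (n - 1)"
  shows "n # s \<in> perms n" "proj n (n # s) = s" "after (n # s) n = {1..n - 1}"
  using insert_max[OF assms(1), of "[]" s] assms(2) by (auto simp: perms_def)

text \<open>Together with transitivity this says that the complement of T among the pairs a < b is
  transitive too; the two conditions characterise inversion sets.\<close>

definition coclosed :: "(nat \<times> nat) set \<Rightarrow> bool" where
  "coclosed T \<longleftrightarrow> (\<forall>a b c. (a, c) \<in> T \<longrightarrow> a < b \<longrightarrow> b < c \<longrightarrow> (a, b) \<in> T \<or> (b, c) \<in> T)"

lemma coclosedD: "coclosed T \<Longrightarrow> (a, c) \<in> T \<Longrightarrow> a < b \<Longrightarrow> b < c \<Longrightarrow> (a, b) \<in> T \<or> (b, c) \<in> T"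
  unfolding coclosed_def by blast

lemma coclosed_invs:
  assumes x: "x \<in> perms n"
  shows "coclosed (invs x)"
  unfolding coclosed_def
proof (intro allI impI)
  fix a b c assume ac: "(a, c) \<in> invs x" and "a < b" "b < c"
  have d: "distinct x" and s: "set x = {1..n}" using x by (auto simp: perms_def)
  have ca: "precedes x c a" using ac by (simp add: invs_precedes)
  have "a \<in> set x" using ca by (simp add: precedes_set)
  moreover have "b \<in> set x"
    using perms_precedes_range[OF x ca] \<open>a < b\<close> \<open>b < c\<close> unfolding s by simp
  ultimately have "precedes x a b \<or> precedes x b a" using precedes_total \<open>a < b\<close> by (metis less_irrefl)
  then show "(a, b) \<in> invs x \<or> (b, c) \<in> invs x"
  proof
    assume "precedes x a b"
    then have "precedes x c b" using precedes_trans[OF d ca] by blast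
    then show "(a, b) \<in> invs x \<or> (b, c) \<in> invs x" using \<open>b < c\<close> by (simp add: invs_precedes)
  qed (use \<open>a < b\<close> in \<open>simp add: invs_precedes\<close>)
qed

lemma maximal_suffix_eq:
  assumes "xs = u @ v" "set v \<subseteq> A" "u \<noteq> [] \<Longrightarrow> last u \<notin> A" "A \<subseteq> set xs"
    and "\<And>a l. a \<in> A \<Longrightarrow> l \<in> set xs - A \<Longrightarrow> \<not> precedes xs a l"
  shows "set v = A"
proof
  show "A \<subseteq> set v"
  proof
    fix a assume "a \<in> A"
    show "a \<in> set v"
    proof (rule ccontr)
      assume "a \<notin> set v"
      then have "a \<in> set u" using \<open>a \<in> A\<close> assms(1,4) by auto
      then have "u \<noteq> []" by auto
      then have "last u \<in> set xs - A" using assms(1,3) by auto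
      moreover have "precedes xs a (last u)"
        using precedes_last[OF \<open>a \<in> set u\<close>] \<open>a \<in> A\<close> calculation assms(1)
        by (auto simp: precedes_append)
      ultimately show False using assms(5) \<open>a \<in> A\<close> by blast
    qed
  qed
qed (fact assms(2))

text \<open>The value n is inserted in front of the longest suffix of a permutation realising the
  pairs of T not involving n whose entries a all satisfy (a, n) \<in> T.\<close>

lemma ex_perm_invs:
  assumes "T \<subseteq> {(a, b). 1 \<le> a \<and> a < b \<and> b \<le> n}" "trans T" "coclosed T"
  shows "\<exists>z\<in>perms n. invs z = T"
  using assms
proof (induction n arbitrary: T)
  case 0
  then show ?case by (auto simp: perms_def invs_precedes)
next
  case (Suc m)
  define T' where "T' = {(a, b) \<in> T. b \<noteq> Suc m}"
  define A where "A = {a. (a, Suc m) \<in> T}"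
  have "T' \<subseteq> {(a, b). 1 \<le> a \<and> a < b \<and> b \<le> m}" using Suc.prems(1) by (fastforce simp: T'_def)
  moreover have "trans T'"
    using Suc.prems(1,2) unfolding T'_def trans_def by fastforce
  moreover have "coclosed T'"
    using Suc.prems(1,3) unfolding T'_def coclosed_def by fastforce
  ultimately obtain q where q: "q \<in> perms m" "invs q = T'" using Suc.IH by blast
  have dq: "distinct q" and sq: "set q = {1..m}" using q(1) by (auto simp: perms_def)
  obtain u v where uv: "q = u @ v" "set v \<subseteq> A" "u \<noteq> [] \<Longrightarrow> last u \<notin> A"
    using split_maximal_suffix[of q A] by blast
  have "set v = A"
  proof (rule maximal_suffix_eq[OF uv])
    show "A \<subseteq> set q" using Suc.prems(1) sq by (auto simp: A_def)
    show "\<not> precedes q a l" if a: "a \<in> A" and l: "l \<in> set q - A" for a l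
    proof
      assume ql: "precedes q a l"
      have "l \<noteq> a" using a l by blast
      then consider "l < a" | "a < l" by linarith
      then show False
      proof cases
        case 1
        then have "(l, a) \<in> T" using ql q(2) by (auto simp: invs_precedes T'_def)
        then have "(l, Suc m) \<in> T" using a Suc.prems(2) by (auto simp: A_def dest: transD)
        then show False using l by (simp add: A_def)
      next
        case 2
        have "l \<le> m" using l sq by auto
        then have "(a, l) \<in> T \<or> (l, Suc m) \<in> T" using coclosedD[OF Suc.prems(3)] a 2 by (simp add: A_def)
        then have "(a, l) \<in> invs q" using l \<open>l \<le> m\<close> q(2) by (auto simp: A_def T'_def)
        then show False using ql precedes_asym[OF dq] by (auto simp: invs_precedes)
      qed
    qed
  qed
  have up: "u @ v \<in> perms (Suc m - 1)" using q(1) uv(1) by simp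
  have "invs (u @ Suc m # v) = T' \<union> (\<lambda>a. (a, Suc m)) ` A"
    using invs_split_max[OF insert_max(1)[OF _ up]] insert_max(2,3)[OF _ up] q(2) uv(1) \<open>set v = A\<close>
    by simp
  also have "\<dots> = T" by (auto simp: T'_def A_def)
  finally show ?case using insert_max(1)[OF _ up] by auto
qed

lemma trancl_less: "(a, c) \<in> S\<^sup>+ \<Longrightarrow> (\<And>a b. (a, b) \<in> S \<Longrightarrow> a < (b::nat)) \<Longrightarrow> a < c"
  by (induction rule: trancl_induct) force+

lemma coclosed_trancl:
  assumes C: "coclosed S" and L: "\<And>a b. (a, b) \<in> S \<Longrightarrow> a < (b::nat)"
  shows "coclosed (S\<^sup>+)"
  unfolding coclosed_def
proof (intro allI impI)
  fix a b c assume "(a, c) \<in> S\<^sup>+"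
  then show "a < b \<Longrightarrow> b < c \<Longrightarrow> (a, b) \<in> S\<^sup>+ \<or> (b, c) \<in> S\<^sup>+"
  proof (induction arbitrary: b rule: trancl_induct)
    case (base c)
    then show ?case using coclosedD[OF C] by blast
  next
    case (step d c)
    have "a < d" using trancl_less[OF step.hyps(1) L] .
    consider "b < d" | "b = d" | "d < b" by linarith
    then show ?case
    proof cases
      case 1
      then show ?thesis using step.IH step.prems(1) step.hyps(2) by (meson trancl.trancl_into_trancl)
    next
      case 2
      then show ?thesis using step.hyps(2) by blast
    next
      case 3
      then have "(d, b) \<in> S \<or> (b, c) \<in> S" using coclosedD[OF C step.hyps(2)] step.prems(2) by blast
      then show ?thesis using step.hyps(1) by (meson r_into_trancl' trancl.trancl_into_trancl)
    qed
  qed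
qed

lemma weak_join_exists:
  assumes x: "x \<in> perms n" and y: "y \<in> perms n"
  obtains z where "is_join n x y z"
proof -
  define S where "S = invs x \<union> invs y"
  define B where "B = {(a, b). 1 \<le> a \<and> a < b \<and> (b::nat) \<le> n}"
  have "S \<subseteq> B" using invs_perms_subset[OF x] invs_perms_subset[OF y] by (auto simp: S_def B_def)
  moreover have "trans B" unfolding trans_def B_def by auto
  ultimately have "S\<^sup>+ \<subseteq> B" by (metis trancl_id trancl_mono subsetI)
  moreover have "coclosed S"
    using coclosed_invs[OF x] coclosed_invs[OF y] unfolding S_def coclosed_def by blast
  then have "coclosed (S\<^sup>+)" using coclosed_trancl \<open>S \<subseteq> B\<close> by (auto simp: B_def)
  ultimately obtain z where z: "z \<in> perms n" "invs z = S\<^sup>+"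
    using ex_perm_invs[of "S\<^sup>+" n] trans_trancl[of S] unfolding B_def by blast
  have "is_join n x y z"
    unfolding is_join_def weak_le_def
  proof (intro conjI ballI impI)
    show "invs x \<subseteq> invs z" "invs y \<subseteq> invs z" using z(2) by (auto simp: S_def)
    fix w assume w: "w \<in> perms n" and "invs x \<subseteq> invs w \<and> invs y \<subseteq> invs w"
    then have "S \<subseteq> invs w" by (simp add: S_def)
    moreover have "trans (invs w)" using w trans_invs by (simp add: perms_def)
    ultimately show "invs z \<subseteq> invs w" using z(2) trancl_mono trancl_id by (metis subsetI)
  qed (fact z(1))
  then show ?thesis by (rule that)
qed

lemma is_join_if_le: "x \<in> perms n \<Longrightarrow> weak_le y x \<Longrightarrow> is_join n x y x"
  by (simp add: is_join_def weak_le_def)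

lemma is_meet_if_le: "x \<in> perms n \<Longrightarrow> weak_le x y \<Longrightarrow> is_meet n x y x"
  by (simp add: is_meet_def weak_le_def)

lemma cn_proj_le:
  assumes "n \<ge> 1" "x \<in> perms n"
  shows "weak_le (cn n (proj n x)) x"
  using proj_perms[OF assms] append_max_props[OF assms(1)] weak_le_split_max[OF _ assms(2)] by simp

lemma le_prepend_max_proj:
  assumes "n \<ge> 1" "x \<in> perms n"
  shows "weak_le x (n # proj n x)"
  using proj_perms[OF assms] prepend_max_props[OF assms(1)] weak_le_split_max[OF assms(2)]
    after_max_subset[OF assms(2)] by simp

lemma upt_perms: "[1..<n] \<in> perms (n - 1)"
  by (auto simp: perms_def)

lemma rev_upt_perms: "rev [1..<n] \<in> perms (n - 1)"
  by (auto simp: perms_def)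

lemma meet_cn_rev:
  assumes n: "n \<ge> 1" and y: "y \<in> perms n"
  shows "is_meet n y (cn n (rev [1..<n])) (cn n (proj n y))"
proof -
  have py: "proj n y \<in> perms (n - 1)" using proj_perms[OF n y] .
  note c1 = append_max_props[OF n py] and c2 = append_max_props[OF n rev_upt_perms]
  have "invs s \<subseteq> invs (rev [1..<n])" if "s \<in> perms (n - 1)" for s
  proof clarify
    fix a b assume "(a, b) \<in> invs s"
    then have "a < b" "precedes s b a" by (auto simp: invs_precedes)
    with perms_precedes_range[OF that, of b a] n show "(a, b) \<in> invs (rev [1..<n])"
      by (auto simp: invs_precedes precedes_rev precedes_upt)
  qed
  then show ?thesis unfolding is_meet_def
    using weak_le_split_max c1 c2 py y by auto
qed

lemma join_cn_prepend_max:
  assumes n: "n \<ge> 1" and s: "s \<in> perms (n - 1)"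
  shows "is_join n (cn n s) (n # [1..<n]) (n # s)"
proof -
  note c1 = append_max_props[OF n s]
    and t1 = prepend_max_props[OF n s] and t2 = prepend_max_props[OF n upt_perms]
  have "invs [1..<n] = {}" by (auto simp: invs_precedes precedes_upt)
  then show ?thesis unfolding is_join_def
    using weak_le_split_max c1 t1 t2 by auto
qed

lemma meet_prepend_max:
  assumes n: "n \<ge> 1" and q: "q \<in> perms n" and t: "u @ v \<in> perms (n - 1)"
    and inv: "invs (u @ v) \<subseteq> invs (proj n q)"
    and v: "set v \<subseteq> after q n" and u: "u \<noteq> [] \<Longrightarrow> last u \<notin> after q n"
  shows "is_meet n q (n # u @ v) (u @ n # v)"
proof -
  note ins = insert_max[OF n t] and top = prepend_max_props[OF n t]
  have dt: "distinct (u @ v)" and st: "set (u @ v) = {1..n - 1}" using t by (auto simp: perms_def)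
  have dq: "distinct q" and sq: "set q = {1..n}" using q by (auto simp: perms_def)
  have w_after_v: "after w n \<subseteq> set v"
    if w: "w \<in> perms n" and w_inv: "invs (proj n w) \<subseteq> invs (u @ v)"
      and w_after: "after w n \<subseteq> after q n" for w
  proof
    fix x assume xw: "x \<in> after w n"
    show "x \<in> set v"
    proof (rule ccontr)
      assume "x \<notin> set v"
      moreover have "x \<in> {1..n - 1}" using after_max_subset[OF w] xw by blast
      ultimately have "x \<in> set u" unfolding st[symmetric] by simp
      define y where "y = last u"
      have "u \<noteq> []" using \<open>x \<in> set u\<close> by auto
      then have y: "y \<notin> after q n" "y \<in> {1..n - 1}" using u st by (auto simp: y_def)
      have dw: "distinct w" and sw: "set w = {1..n}" using w by (auto simp: perms_def)
      have "x \<noteq> y" using xw w_after y(1) by blast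
      then have t_xy: "precedes (u @ v) x y"
        using precedes_last[OF \<open>x \<in> set u\<close>] by (auto simp: y_def precedes_append)
      have "y \<noteq> n" "y \<notin> after w n" using y w_after n by auto
      then have w_yx: "precedes w y x"
        using precedes_if_not_after[OF dw xw] y(2) sw by auto
      have q_yx: "precedes q y x"
        using precedes_if_not_after[OF dq] xw w_after y sq \<open>y \<noteq> n\<close> by auto
      show False
      proof (cases "x < y")
        case True
        then have "(x, y) \<in> invs (proj n w)"
          using w_yx \<open>y \<noteq> n\<close> \<open>x \<in> {1..n - 1}\<close> by (auto simp: invs_precedes precedes_proj)
        then show False using w_inv t_xy precedes_asym[OF dt] by (auto simp: invs_precedes)
      next
        case False
        then have "(y, x) \<in> invs (u @ v)" using t_xy \<open>x \<noteq> y\<close> by (simp add: invs_precedes)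
        then show False using inv q_yx precedes_asym[OF dq] by (auto simp: invs_precedes precedes_proj)
      qed
    qed
  qed
  show ?thesis unfolding is_meet_def
  proof (intro conjI ballI impI)
    show "u @ n # v \<in> perms n" by (fact ins(1))
    show "weak_le (u @ n # v) q" using weak_le_split_max[OF ins(1) q] ins inv v by simp
    show "weak_le (u @ n # v) (n # u @ v)" using weak_le_split_max[OF ins(1) top(1)] ins top st by auto
    fix w assume w: "w \<in> perms n" and "weak_le w q \<and> weak_le w (n # u @ v)"
    then show "weak_le w (u @ n # v)"
      using weak_le_split_max[OF w q] weak_le_split_max[OF w top(1)] weak_le_split_max[OF w ins(1)]
        w_after_v[OF w] top(2) ins(2,3) by simp
  qed
qed

lemma lattice_congruenceD:
  assumes "lattice_congruence n R"
  shows "equiv (perms n) R"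
    and "(x, x') \<in> R \<Longrightarrow> (y, y') \<in> R \<Longrightarrow> is_join n x y z \<Longrightarrow> is_join n x' y' z' \<Longrightarrow> (z, z') \<in> R"
    and "(x, x') \<in> R \<Longrightarrow> (y, y') \<in> R \<Longrightarrow> is_meet n x y z \<Longrightarrow> is_meet n x' y' z' \<Longrightarrow> (z, z') \<in> R"
  using assms unfolding lattice_congruence_def by blast+

lemma restr_equiv:
  assumes n: "n \<ge> 1" and L: "lattice_congruence n R"
  shows "equiv (perms (n - 1)) (restr n R)"
proof -
  have eq: "equiv (perms n) R" by (rule lattice_congruenceD(1)[OF L])
  show ?thesis
    unfolding equiv_def refl_on_def sym_def trans_def restr_def
    using eq append_max_props(1)[OF n] by (auto simp: equiv_def refl_on_def dest: symD transD)
qed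

lemma cong_cn_proj:
  assumes n: "n \<ge> 1" and L: "lattice_congruence n R" and xy: "(x, y) \<in> R"
  shows "(cn n (proj n x), cn n (proj n y)) \<in> R"
proof -
  have eq: "equiv (perms n) R" by (rule lattice_congruenceD(1)[OF L])
  have "x \<in> perms n" "y \<in> perms n" using equiv_type[OF eq] xy by auto
  moreover have "(cn n (rev [1..<n]), cn n (rev [1..<n])) \<in> R"
    using eq append_max_props(1)[OF n rev_upt_perms] by (simp add: equiv_def refl_on_def)
  ultimately show ?thesis
    using lattice_congruenceD(3)[OF L xy _ meet_cn_rev[OF n] meet_cn_rev[OF n]] by blast
qed

lemma class_member_with_proj:
  assumes n: "n \<ge> 1" and L: "lattice_congruence n R" and p: "p \<in> perms n"
    and t: "t \<in> perms (n - 1)" and pt: "(cn n (proj n p), cn n t) \<in> R"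
  obtains q where "(p, q) \<in> R" "proj n q = t"
proof -
  have eq: "equiv (perms n) R" by (rule lattice_congruenceD(1)[OF L])
  have refl: "(x, x) \<in> R" if "x \<in> perms n" for x
    using eq that by (simp add: equiv_def refl_on_def)
  have sym: "(y, x) \<in> R" if "(x, y) \<in> R" for x y using eq that by (meson equiv_def symD)
  have trans: "(x, z) \<in> R" if "(x, y) \<in> R" "(y, z) \<in> R" for x y z
    using eq that by (meson equiv_def transD)
  note ct = append_max_props[OF n t]
  obtain p' where join: "is_join n p (cn n t) p'" using weak_join_exists[OF p ct(1)] .
  have p': "p' \<in> perms n" using join by (simp add: is_join_def)
  have "(p, p') \<in> R"
    using lattice_congruenceD(2)[OF L refl[OF p] pt is_join_if_le[OF p cn_proj_le[OF n p]] join] .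
  define u' where "u' = proj n p'"
  have u': "u' \<in> perms (n - 1)" using proj_perms[OF n p'] by (simp add: u'_def)
  have "(cn n t, cn n u') \<in> R"
    using trans[OF sym[OF pt] cong_cn_proj[OF n L \<open>(p, p') \<in> R\<close>]] by (simp add: u'_def)
  then have top: "(n # t, n # u') \<in> R"
    using lattice_congruenceD(2)[OF L _ refl[OF prepend_max_props(1)[OF n upt_perms]]
        join_cn_prepend_max[OF n t] join_cn_prepend_max[OF n u']] by blast
  have "weak_le (cn n t) p'" using join by (simp add: is_join_def)
  then have inv: "invs t \<subseteq> invs u'" using weak_le_split_max[OF ct(1) p'] ct by (simp add: u'_def)
  obtain u v where uv: "t = u @ v" "set v \<subseteq> after p' n" "u \<noteq> [] \<Longrightarrow> last u \<notin> after p' n"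
    using split_maximal_suffix[of t "after p' n"] by blast
  have "is_meet n p' (n # t) (u @ n # v)"
    using meet_prepend_max[OF n p'] t inv uv by (simp add: u'_def)
  moreover have "is_meet n p' (n # u') p'"
    using is_meet_if_le[OF p' le_prepend_max_proj[OF n p']] by (simp add: u'_def)
  ultimately have "(u @ n # v, p') \<in> R"
    using lattice_congruenceD(3)[OF L refl[OF p'] top] by blast
  then have "(p, u @ n # v) \<in> R" using trans[OF \<open>(p, p') \<in> R\<close> sym] by blast
  moreover have "proj n (u @ n # v) = t" using insert_max(2)[OF n] t uv(1) by simp
  ultimately show ?thesis by (rule that)
qed

lemma proj_class_eq:
  assumes n: "n \<ge> 1" and L: "lattice_congruence n R" and p: "p \<in> perms n"
  shows "proj n ` (R `` {p}) = restr n R `` {proj n p}"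
proof
  have eq: "equiv (perms n) R" by (rule lattice_congruenceD(1)[OF L])
  show "proj n ` (R `` {p}) \<subseteq> restr n R `` {proj n p}"
    using cong_cn_proj[OF n L] proj_perms[OF n] equiv_type[OF eq] p by (auto simp: restr_def)
  show "restr n R `` {proj n p} \<subseteq> proj n ` (R `` {p})"
  proof
    fix t assume "t \<in> restr n R `` {proj n p}"
    then have "t \<in> perms (n - 1)" "(cn n (proj n p), cn n t) \<in> R" by (auto simp: restr_def)
    then obtain q where "(p, q) \<in> R" "proj n q = t" using class_member_with_proj[OF n L p] by blast
    then show "t \<in> proj n ` (R `` {p})" by blast
  qed
qed

theorem mainTheorem4:
  fixes n :: nat and R :: "(nat list \<times> nat list) set"
  assumes "n \<ge> 1" and "lattice_congruence n R"
  shows "(\<forall>X \<in> perms n // R. proj n ` X \<in> perms (n - 1) // restr n R) \<and>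
         (\<forall>X \<in> perms n // R. \<forall>Y \<in> perms n // R.
            proj n ` X = proj n ` Y \<or> proj n ` X \<inter> proj n ` Y = {})"
proof -
  have classes: "\<forall>X \<in> perms n // R. proj n ` X \<in> perms (n - 1) // restr n R"
  proof
    fix X assume "X \<in> perms n // R"
    then obtain p where "p \<in> perms n" "X = R `` {p}" by (auto elim: quotientE)
    then show "proj n ` X \<in> perms (n - 1) // restr n R"
      using proj_class_eq[OF assms] proj_perms[OF assms(1)] by (simp add: quotientI)
  qed
  then show ?thesis using quotient_disj[OF restr_equiv[OF assms]] by blast
qed
end
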